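(* Let $N=1$. For every $k>2L$, every window string $\vec n=(n_1,\dots,n_k)$ with $L\ge n_1\ge\cdots\ge n_k\ge1$ and every $\mu\in\{0,1\}^{k-1}$, there exists an index $i$ with $2\le i\le k-1$ and $n_{i-1}=n_i=n_{i+1}$, and consequently $$\mathbf{T}^{(k)}_{\mu}(\vec n)=c\,\mathbf{T}^{(k-2)}_{\mu'}(\vec n')$$ for a scalar $c$ depending only on $k,i,\mu$ (independent of $U_1,\dots,U_L$ and $\tilde O$), where $\vec n'$ is $\vec n$ with the entries $n_{i-1},n_i$ deleted and $\mu'$ is $\mu$ with its $(i-1)$-th and $i$-th entries deleted. In particular every control tensor of order $k>2L$ is contractible to one of order $k-2$, so all single-qubit control tensors reduce to those of order at most $2L$.
   Context: Fix integers $L\ge 1$ and $N\ge 1$, and a set $Q$ of $N$ qubit labels. For $q\in Q$ let $\sigma_z^{[q]}$ denote the Pauli-$Z$ operator acting on qubit $q$ tensored with the identity on all other qubits of $(\mathbb{C}^2)^{\otimes N}$. (Digital control) Let $U_1,\dots,U_L$ be arbitrary unitaries on $(\mathbb{C}^2)^{\otimes N}$ ($U_n$ is the control propagator, constant on the $n$-th time window), and let $\tilde O$ be an arbitrary Hermitian unitary operator on $(\mathbb{C}^2)^{\otimes N}$ (the toggling-frame observable). For $q\in Q$ and $n\in\{1,\dots,L\}$ define $\tilde h_q(n)=U_n^\dagger\sigma_z^{[q]}U_n$ and $\bar h_q(n)=-\tilde O^{-1}\tilde h_q(n)\tilde O$. For $k\ge1$, a window string $\vec n=(n_1,\dots,n_k)$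 with $L\ge n_1\ge\cdots\ge n_k\ge1$, a qubit string $\vec q=(q_1,\dots,q_k)\in Q^k$ and a sign string $\mu\in\{0,1\}^{k-1}$, the (window-framed) control tensor is $$\mathbf{T}^{(k)}_{\vec q;\mu}(\vec n)=\sum_{b\in\{0,1\}^k}(-1)^{\sum_{j=1}^{k-1}\mu_j b_{j+1}}\Big(\prod^{\downarrow}_{i:\,b_i=1}\bar h_{q_i}(n_i)\Big)\Big(\prod^{\uparrow}_{i:\,b_i=0}\tilde h_{q_i}(n_i)\Big),$$ where $\prod^{\downarrow}$ is the ordered product with the index $i$ decreasing from left to right, $\prod^{\uparrow}$ is the ordered product with $i$ increasing from left to right, and an empty product is the identity. When $N=1$ the qubit string is omitted and we write $\mathbf{T}^{(k)}_{\mu}(\vec n)$. *)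

theory Defs
  imports "HOL-Analysis.Analysis"
begin

text \<open>Single qubit (N = 1): operators on C^2 are complex 2x2 matrices.\<close>

type_synonym cmat2 = "complex ^ 2 ^ 2"

definition cadj :: "cmat2 \<Rightarrow> cmat2" where
  "cadj A = (\<chi> i j. cnj (A $ j $ i))"

definition unitary2 :: "cmat2 \<Rightarrow> bool" where
  "unitary2 U \<longleftrightarrow> cadj U ** U = mat 1 \<and> U ** cadj U = mat 1"

definition hermitian2 :: "cmat2 \<Rightarrow> bool" where
  "hermitian2 A \<longleftrightarrow> cadj A = A"

definition sigma_z :: cmat2 where
  "sigma_z = (\<chi> i j. if i = j then (if i = 1 then 1 else -1) else 0)"

definition cscale :: "complex \<Rightarrow> cmat2 \<Rightarrow> cmat2" where
  "cscale c A = (\<chi> i j. c * A $ i $ j)"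

definition htil :: "(nat \<Rightarrow> cmat2) \<Rightarrow> nat \<Rightarrow> cmat2" where
  "htil U n = cadj (U n) ** sigma_z ** U n"

definition hbar :: "(nat \<Rightarrow> cmat2) \<Rightarrow> cmat2 \<Rightarrow> nat \<Rightarrow> cmat2" where
  "hbar U Om n = - (matrix_inv Om ** htil U n ** Om)"

text \<open>Lists are 0-indexed: ns ! (i-1) is n_i,
  mu ! (j-1) is mu_j (True = 1), b ! (i-1) is b_i.
  The product over b_i = 1 has index decreasing left to right, the product over
  b_i = 0 has index increasing left to right.\<close>
definition ctensor :: "(nat \<Rightarrow> cmat2) \<Rightarrow> cmat2 \<Rightarrow> bool list \<Rightarrow> nat list \<Rightarrow> cmat2" where
  "ctensor U Om mu ns =
    (let k = length ns in
     \<Sum>b\<in>{b :: bool list. length b = k}.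
        cscale ((-1) ^ (\<Sum>j<k-1. of_bool (mu ! j) * of_bool (b ! (j+1))))
          (foldr (\<lambda>i acc. hbar U Om (ns ! i) ** acc) (filter (\<lambda>i. b ! i) (rev [0..<k])) (mat 1)
           ** foldr (\<lambda>i acc. htil U (ns ! i) ** acc) (filter (\<lambda>i. \<not> b ! i) [0..<k]) (mat 1)))"

end

theory Submission imports Defs begin

text \<open>Both tilde h(n) and bar h(n) are involutions. If three consecutive windows carry the same n,
  the three corresponding bits of b enter the two ordered products only through their parity: the
  eight summands fall into two parity classes of four equal operator terms. Within a class the signs
  cancel unless the three sign bits attached to these positions agree, and then the class adds up to
  four times a single term of the tensor of order k - 2. A nonincreasing window string with values in
  {1..L} and length k > 2L always contains such a triple, as otherwise it would descend at least
  once every two steps.\<close>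

lemma conjugate_involution:
  fixes A P Q :: "'a::semiring_1 ^ 'n ^ 'n"
  assumes "P ** Q = mat 1" "Q ** P = mat 1" "A ** A = mat 1"
  shows "(P ** A ** Q) ** (P ** A ** Q) = mat 1"
proof -
  have "(P ** A ** Q) ** (P ** A ** Q) = P ** (A ** (Q ** P) ** A) ** Q"
    by (simp add: matrix_mul_assoc)
  then show ?thesis
    using assms by simp
qed

lemma matrix_mul_neg_neg: "(- A) ** (- B) = (A :: 'a::ring_1 ^ 'n ^ 'm) ** B"
  by (simp add: vec_eq_iff matrix_matrix_mult_def sum_negf)

lemma matrix_inv_two_sided:
  assumes "A ** B = mat 1" "B ** A = mat 1"
  shows "A ** matrix_inv A = mat 1" "matrix_inv A ** A = mat 1"
proof -
  have "\<exists>A'. A ** A' = mat 1 \<and> A' ** A = mat 1"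
    using assms by blast
  then have "A ** matrix_inv A = mat 1 \<and> matrix_inv A ** A = mat 1"
    unfolding matrix_inv_def by (rule someI_ex)
  then show "A ** matrix_inv A = mat 1" "matrix_inv A ** A = mat 1"
    by auto
qed

lemma sigma_z_involution: "sigma_z ** sigma_z = mat 1"
  by (simp add: vec_eq_iff matrix_matrix_mult_def sigma_z_def mat_def sum_2 forall_2)

lemma htil_involution:
  assumes "unitary2 (U n)"
  shows "htil U n ** htil U n = mat 1"
  using conjugate_involution[OF _ _ sigma_z_involution] assms
  by (simp add: htil_def unitary2_def)

lemma hbar_involution:
  assumes "unitary2 (U n)" "unitary2 Om"
  shows "hbar U Om n ** hbar U Om n = mat 1"
proof -
  have "Om ** cadj Om = mat 1" "cadj Om ** Om = mat 1"
    using assms(2) by (simp_all add: unitary2_def)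
  then have "matrix_inv Om ** Om = mat 1" "Om ** matrix_inv Om = mat 1"
    by (rule matrix_inv_two_sided)+
  then show ?thesis
    using conjugate_involution[OF _ _ htil_involution[of U n, OF assms(1)]]
    by (simp add: hbar_def matrix_mul_neg_neg)
qed

definition mat_prod :: "cmat2 list \<Rightarrow> cmat2" where
  "mat_prod As = foldr (**) As (mat 1)"

lemma mat_prod_simps [simp]:
  "mat_prod [] = mat 1"
  "mat_prod (A # As) = A ** mat_prod As"
  "mat_prod (As @ Bs) = mat_prod As ** mat_prod Bs"
  by (simp_all add: mat_prod_def) (induction As, simp_all add: mat_prod_def matrix_mul_assoc)

lemma foldr_filter_mat_prod:
  "foldr (\<lambda>i A. f i ** A) (filter P xs) (mat 1) = mat_prod (map (\<lambda>i. if P i then f i else mat 1) xs)"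
  by (induction xs) auto

text \<open>The sign list has one entry per bit. In ctensor, mu_j multiplies b_(j+1), so its sign list is
  False # mu.\<close>

definition word_summand ::
    "(nat \<Rightarrow> cmat2) \<Rightarrow> (nat \<Rightarrow> cmat2) \<Rightarrow> bool list \<Rightarrow> nat list \<Rightarrow> bool list \<Rightarrow> cmat2" where
  "word_summand hb ht sg ns b =
     cscale ((-1) ^ (\<Sum>(s, x)\<leftarrow>zip sg b. of_bool (s \<and> x)))
       (mat_prod (rev (map2 (\<lambda>n x. if x then hb n else mat 1) ns b))
        ** mat_prod (map2 (\<lambda>n x. if \<not> x then ht n else mat 1) ns b))"

definition word_tensor :: "(nat \<Rightarrow> cmat2) \<Rightarrow> (nat \<Rightarrow> cmat2) \<Rightarrow> bool list \<Rightarrow> nat list \<Rightarrow> cmat2" where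
  "word_tensor hb ht sg ns = (\<Sum>b\<in>{b. length b = length ns}. word_summand hb ht sg ns b)"

lemma sign_exponent_eq:
  assumes "length b = k" "length mu = k - 1"
  shows "(\<Sum>j<k - 1. of_bool (mu ! j) * of_bool (b ! (j + 1)))
    = (\<Sum>(s, x)\<leftarrow>zip (False # mu) b. of_bool (s \<and> x) :: nat)"
proof (cases b)
  case (Cons x b')
  have "(\<Sum>(s, x)\<leftarrow>zip mu b'. of_bool (s \<and> x) :: nat) = (\<Sum>j<k - 1. of_bool (mu ! j \<and> b' ! j))"
    using assms Cons by (simp add: sum_list_sum_nth atLeast0LessThan nth_zip del: of_bool_conj)
  then show ?thesis
    using Cons by (simp add: Collect_conj_eq Int_assoc del: of_bool_conj)
qed (use assms in simp)

lemma map_upt_nth_eq_map2: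
  "length b = length ns \<Longrightarrow> map (\<lambda>i. f (ns ! i) (b ! i)) [0..<length ns] = map2 f ns b"
  by (auto intro: nth_equalityI)

lemma ctensor_eq_word_tensor:
  assumes "length mu = length ns - 1"
  shows "ctensor U Om mu ns = word_tensor (hbar U Om) (htil U) (False # mu) ns"
  unfolding ctensor_def word_tensor_def word_summand_def Let_def foldr_filter_mat_prod rev_map[symmetric]
  using assms
  by (intro sum.cong refl, unfold mem_Collect_eq)
    (simp only: sign_exponent_eq, simp add: map_upt_nth_eq_map2[symmetric])
lemma sum_lists_length_add:
  "(\<Sum>b\<in>{b :: 'a::finite list. length b = m + n}. f b)
    = (\<Sum>u\<in>{u. length u = m}. \<Sum>v\<in>{v. length v = n}. f (u @ v))"
proof -
  have split: "{b :: 'a list. length b = m + n} = (\<lambda>(u, v). u @ v) ` ({u. length u = m} \<times> {v. length v = n})"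
  proof (intro set_eqI iffI)
    fix b :: "'a list"
    assume "b \<in> {b. length b = m + n}"
    then show "b \<in> (\<lambda>(u, v). u @ v) ` ({u. length u = m} \<times> {v. length v = n})"
      by (intro image_eqI[of _ _ "(take m b, drop m b)"]) auto
  qed auto
  have "inj_on (\<lambda>(u, v). u @ v) ({u :: 'a list. length u = m} \<times> {v. length v = n})"
    by (auto simp: inj_on_def)
  then show ?thesis
    unfolding split by (simp add: sum.reindex sum.cartesian_product split_def)
qed

lemma sum_lists_length_Suc:
  "(\<Sum>b\<in>{b :: 'a::finite list. length b = Suc n}. f b) = (\<Sum>x\<in>UNIV. \<Sum>b\<in>{b. length b = n}. f (x # b))"
proof -
  have "{b :: 'a list. length b = Suc n} = (\<lambda>(x, b). x # b) ` (UNIV \<times> {b. length b = n})"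
    by (auto simp: length_Suc_conv)
  moreover have "inj_on (\<lambda>(x, b). x # b) (UNIV \<times> {b :: 'a list. length b = n})"
    by (auto simp: inj_on_def)
  ultimately show ?thesis
    by (simp add: sum.reindex sum.cartesian_product split_def)
qed

lemma cscale_sum: "cscale c (sum f A) = (\<Sum>x\<in>A. cscale c (f x))"
  by (simp add: vec_eq_iff cscale_def sum_component sum_distrib_left)

lemma involution_cancel_left: "A ** A = mat 1 \<Longrightarrow> A ** (A ** B) = (B :: 'a::semiring_1 ^ 'n ^ 'n)"
  by (simp add: matrix_mul_assoc)

text \<open>Only the parity of the three middle bits survives in the operator, and for each parity
  the four sign patterns cancel unless s1 = s2 = s3.\<close>

lemma word_summand_sum_triple:
  assumes hb: "hb n ** hb n = mat 1" and ht: "ht n ** ht n = mat 1"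
    and "length sA = length nA" "length sC = length nC" "length u = length nA" "length w = length nC"
  shows "(\<Sum>v\<in>{v. length v = 3}. word_summand hb ht (sA @ [s1, s2, s3] @ sC) (nA @ [n, n, n] @ nC) (u @ v @ w))
    = cscale (if s1 = s2 \<and> s2 = s3 then 4 else 0)
        (\<Sum>v\<in>{v. length v = 1}. word_summand hb ht (sA @ [s1] @ sC) (nA @ [n] @ nC) (u @ v @ w))"
  using assms(3-6)
  by (simp add: word_summand_def numeral_3_eq_3 sum_lists_length_Suc UNIV_bool zip_append
      matrix_mul_assoc[symmetric] involution_cancel_left[OF hb] involution_cancel_left[OF ht])
    (simp add: vec_eq_iff cscale_def)

lemma length_append_triple: "length (xs @ ys @ zs) = length xs + (length ys + length zs)"
  by simp

lemma word_tensor_contract_triple: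
  assumes "hb n ** hb n = mat 1" "ht n ** ht n = mat 1"
    and "length sA = length nA" "length sC = length nC"
  shows "word_tensor hb ht (sA @ [s1, s2, s3] @ sC) (nA @ [n, n, n] @ nC)
    = cscale (if s1 = s2 \<and> s2 = s3 then 4 else 0) (word_tensor hb ht (sA @ [s1] @ sC) (nA @ [n] @ nC))"
proof -
  let ?A = "{u :: bool list. length u = length nA}" and ?C = "{w :: bool list. length w = length nC}"
  let ?c = "if s1 = s2 \<and> s2 = s3 then 4 else 0 :: complex"
  have "word_tensor hb ht (sA @ [s1, s2, s3] @ sC) (nA @ [n, n, n] @ nC)
      = (\<Sum>u\<in>?A. \<Sum>w\<in>?C. \<Sum>v\<in>{v. length v = 3}.
           word_summand hb ht (sA @ [s1, s2, s3] @ sC) (nA @ [n, n, n] @ nC) (u @ v @ w))"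
    unfolding word_tensor_def length_append_triple sum_lists_length_add
    by (simp add: numeral_3_eq_3, rule sum.cong[OF refl], rule sum.swap)
  also have "\<dots> = (\<Sum>u\<in>?A. \<Sum>w\<in>?C. cscale ?c (\<Sum>v\<in>{v. length v = 1}.
           word_summand hb ht (sA @ [s1] @ sC) (nA @ [n] @ nC) (u @ v @ w)))"
    using word_summand_sum_triple[of hb n ht, OF assms] by (intro sum.cong refl) auto
  also have "\<dots> = cscale ?c (word_tensor hb ht (sA @ [s1] @ sC) (nA @ [n] @ nC))"
    unfolding word_tensor_def length_append_triple sum_lists_length_add cscale_sum
      length_Cons list.size(3) One_nat_def[symmetric]
    by (rule sum.cong[OF refl], rule sum.swap)
  finally show ?thesis .
qed

lemma take_nth3_drop:
  assumes "j + 3 \<le> length xs"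
  shows "xs = take j xs @ [xs ! j, xs ! (j + 1), xs ! (j + 2)] @ drop (j + 3) xs"
proof -
  have "drop j xs = xs ! j # xs ! (j + 1) # xs ! (j + 2) # drop (j + 3) xs"
    using assms by (simp add: Cons_nth_drop_Suc numeral_3_eq_3)
  then show ?thesis
    by (metis append_Cons append_Nil append_take_drop_id)
qed

definition contraction_coeff :: "bool list \<Rightarrow> nat \<Rightarrow> complex" where
  "contraction_coeff mu i =
    (let s = False # mu in if s ! (i - 2) = s ! (i - 1) \<and> s ! (i - 1) = s ! i then 4 else 0)"

lemma ctensor_contract:
  assumes "length mu = length ns - 1" "2 \<le> i" "i < length ns"
    and "ns ! (i - 2) = ns ! (i - 1)" "ns ! (i - 1) = ns ! i"
    and "unitary2 (U (ns ! i))" "unitary2 Om"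
  shows "ctensor U Om mu ns = cscale (contraction_coeff mu i)
    (ctensor U Om (take (i - 2) mu @ drop i mu) (take (i - 2) ns @ drop i ns))"
proof -
  obtain j where i: "i = j + 2"
    using assms(2) by (metis add.commute le_Suc_ex)
  define n where "n = ns ! i"
  define s where "s = False # mu"
  have ns: "ns = take j ns @ [n, n, n] @ drop (j + 3) ns"
    using take_nth3_drop[of j ns] assms(3-5) by (simp add: i n_def)
  have s: "s = take j s @ [s ! j, s ! (j + 1), s ! (j + 2)] @ drop (j + 3) s"
    using take_nth3_drop[of j s] assms(1,3) by (simp add: i s_def)
  have contracted_ns: "take j ns @ [n] @ drop (j + 3) ns = take (i - 2) ns @ drop i ns"
    using assms(3) by (simp add: i n_def Cons_nth_drop_Suc numeral_3_eq_3)
  have contracted_s: "take j s @ [s ! j] @ drop (j + 3) s = False # (take (i - 2) mu @ drop i mu)"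
    using assms(1,3) by (simp add: i s_def take_Suc_conv_app_nth[symmetric] numeral_3_eq_3)
  have involutions: "hbar U Om n ** hbar U Om n = mat 1" "htil U n ** htil U n = mat 1"
    using assms(6,7) by (simp_all add: n_def hbar_involution htil_involution)
  have "ctensor U Om mu ns = word_tensor (hbar U Om) (htil U) s ns"
    using assms(1) by (simp add: s_def ctensor_eq_word_tensor)
  also have "\<dots> = word_tensor (hbar U Om) (htil U) (take j s @ [s ! j, s ! (j + 1), s ! (j + 2)] @ drop (j + 3) s)
      (take j ns @ [n, n, n] @ drop (j + 3) ns)"
    using ns s by simp
  also have "\<dots> = cscale (contraction_coeff mu i)
      (word_tensor (hbar U Om) (htil U) (take j s @ [s ! j] @ drop (j + 3) s) (take j ns @ [n] @ drop (j + 3) ns))"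
    using word_tensor_contract_triple[of "hbar U Om" n "htil U", OF involutions] assms(1,3)
    by (simp add: contraction_coeff_def s_def i)
  also have "\<dots> = cscale (contraction_coeff mu i)
      (ctensor U Om (take (i - 2) mu @ drop i mu) (take (i - 2) ns @ drop i ns))"
    unfolding contracted_ns contracted_s using assms(1,3) by (simp add: i ctensor_eq_word_tensor)
  finally show ?thesis .
qed

lemma nonincreasing_bounded_constant_triple:
  assumes "2 * L < length ns"
    and mono: "\<forall>j. 0 < j \<and> j < length ns \<longrightarrow> ns ! j \<le> ns ! (j - 1)"
    and bounds: "\<forall>j < length ns. 1 \<le> ns ! j \<and> ns ! j \<le> L"
  shows "\<exists>i. 2 \<le> i \<and> i < length ns \<and> ns ! (i - 2) = ns ! (i - 1) \<and> ns ! (i - 1) = ns ! i"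
proof (rule ccontr)
  assume no_triple: "\<not> ?thesis"
  have descent: "ns ! (j + 2) < ns ! j" if "j + 2 < length ns" for j
  proof -
    have "ns ! (j + 1) \<le> ns ! j" "ns ! (j + 2) \<le> ns ! (j + 1)"
      using mono[rule_format, of "j + 1"] mono[rule_format, of "j + 2"] that by simp_all
    moreover have "\<not> (ns ! j = ns ! (j + 1) \<and> ns ! (j + 1) = ns ! (j + 2))"
      using no_triple that[unfolded add_2_eq_Suc'] by force
    ultimately show ?thesis
      by linarith
  qed
  have "ns ! (2 * t) + t \<le> ns ! 0" if "2 * t < length ns" for t
    using that
  proof (induction t)
    case (Suc t)
    then show ?case
      using descent[of "2 * t"] by simp
  qed simp
  then have "ns ! (2 * L) + L \<le> ns ! 0"
    using assms(1) by blast
  moreover have "ns ! 0 \<le> L" "1 \<le> ns ! (2 * L)"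
    using bounds[rule_format, OF le_less_trans[OF le0 assms(1)]] bounds[rule_format, OF assms(1)]
    by simp_all
  ultimately show False
    by simp
qed

theorem mainTheorem3:
  fixes L :: nat
  assumes "L \<ge> 1"
  shows "\<exists>c :: nat \<Rightarrow> nat \<Rightarrow> bool list \<Rightarrow> complex.
    \<forall>k (ns :: nat list) (mu :: bool list).
      k > 2 * L \<and> length ns = k \<and> length mu = k - 1 \<and>
      (\<forall>j. 0 < j \<and> j < k \<longrightarrow> ns ! j \<le> ns ! (j - 1)) \<and>
      (\<forall>j<k. 1 \<le> ns ! j \<and> ns ! j \<le> L)
      \<longrightarrow>
      (\<exists>i. 2 \<le> i \<and> i \<le> k - 1 \<and>
           ns ! (i - 2) = ns ! (i - 1) \<and> ns ! (i - 1) = ns ! i \<and>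
           (\<forall>(U :: nat \<Rightarrow> cmat2) (Om :: cmat2).
              (\<forall>n\<in>{1..L}. unitary2 (U n)) \<and> hermitian2 Om \<and> unitary2 Om \<longrightarrow>
              ctensor U Om mu ns =
                cscale (c k i mu)
                  (ctensor U Om (take (i - 2) mu @ drop i mu) (take (i - 2) ns @ drop i ns))))"
proof (intro exI[of _ "\<lambda>k i mu. contraction_coeff mu i"] allI impI)
  fix k ns and mu :: "bool list"
  assume hyps: "k > 2 * L \<and> length ns = k \<and> length mu = k - 1 \<and>
      (\<forall>j. 0 < j \<and> j < k \<longrightarrow> ns ! j \<le> ns ! (j - 1)) \<and> (\<forall>j<k. 1 \<le> ns ! j \<and> ns ! j \<le> L)"
  then obtain i where i: "2 \<le> i" "i < k" "ns ! (i - 2) = ns ! (i - 1)" "ns ! (i - 1) = ns ! i"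
    using nonincreasing_bounded_constant_triple[of L ns] by auto
  have n_range: "ns ! i \<in> {1..L}"
    using hyps i(2) by auto
  show "\<exists>i. 2 \<le> i \<and> i \<le> k - 1 \<and> ns ! (i - 2) = ns ! (i - 1) \<and> ns ! (i - 1) = ns ! i \<and>
      (\<forall>U Om. (\<forall>n\<in>{1..L}. unitary2 (U n)) \<and> hermitian2 Om \<and> unitary2 Om \<longrightarrow>
         ctensor U Om mu ns = cscale (contraction_coeff mu i)
           (ctensor U Om (take (i - 2) mu @ drop i mu) (take (i - 2) ns @ drop i ns)))"
  proof (intro exI[of _ i] conjI allI impI)
    fix U Om
    assume "(\<forall>n\<in>{1..L}. unitary2 (U n)) \<and> hermitian2 Om \<and> unitary2 Om"
    then show "ctensor U Om mu ns = cscale (contraction_coeff mu i)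
           (ctensor U Om (take (i - 2) mu @ drop i mu) (take (i - 2) ns @ drop i ns))"
      using ctensor_contract[of mu ns i U Om] hyps i n_range by simp
  qed (use i in auto)
qed

end
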